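(* Let $\delta\in(0,1)$, $\epsilon>0$, $s>1$. Consider any algorithm following the per-arm adaptive phase scheme with private means described in the context, with an arbitrary sampling rule, and stopping according to the private GLR stopping rule with the thresholds $c_{\epsilon,k_1,k_2}$ defined in the context. Then for every bandit instance whose arm distributions are $1$-sub-Gaussian with a unique best arm $a^\star$, $\mathbb{P}(\tau_\delta<\infty,\ \hat a\neq a^\star)\le\delta$, i.e. the algorithm is $\delta$-correct.
   Context: $K$ arms with 1-sub-Gaussian reward distributions and means $\mu_a$, unique best arm $a^\star=\arg\max_a\mu_a$. At round $n$ the algorithm pulls $I_n$ (chosen by any rule based on the past and internal randomness) and observes $X_n\sim\nu_{I_n}$; $N_{n,a}=\sum_{t<n}\mathbf{1}\{I_t=a\}$. Adaptive phases: each arm is pulled once in rounds $1..K$; arm $a$ has phase index $k_a$ starting at 1 with $T_1(a)=K+1$ (phase-1 statistics $\tilde N_{1,a}=1$, $\hat\mu_{1,a}$ the initial reward, $\tilde\mu_{1,a}=\hat\mu_{1,a}+Y_{1,a}$). At the start of each round $n>K$, for every $a$ with $N_{n,a}\ge2N_{T_{k_a}(a),a}$: $k_a\leftarrow k_a+1$, $T_{k_a}(a)=n$, $\tilde N_{k_a,a}=N_{T_{k_a}(a),a}-N_{T_{k_a-1}(a),a}$, $\hat\mu_{k_a,a}=\tilde N_{k_a,a}^{-1}\sum_{s=T_{k_a-1}(a)}^{T_{k_a}(a)-1}X_s\mathbf{1}\{I_s=a\}$, $\tilde\mu_{k_a,a}=\hat\mu_{k_a,a}+Y_{k_a,a}$,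 where $Y_{k,a}\sim$ Laplace with scale $1/(\epsilon\tilde N_{k,a})$ (density $\frac{1}{2b}e^{-|x|/b}$, $b$ the scale), independent of everything else. $k_{n,a}$ is the phase of $a$ at round $n$. Private GLR stopping rule: with $\hat a_n=\arg\max_a\tilde\mu_{k_{n,a},a}$, $\tau_\delta=\inf\{n:\forall b\ne\hat a_n,\ \frac{(\tilde\mu_{k_{n,\hat a_n},\hat a_n}-\tilde\mu_{k_{n,b},b})^2}{1/\tilde N_{k_{n,\hat a_n},\hat a_n}+1/\tilde N_{k_{n,b},b}}\ge2c_{\epsilon,k_{n,\hat a_n},k_{n,b}}(\tilde N_{k_{n,\hat a_n},\hat a_n},\tilde N_{k_{n,b},b},\delta)\}$, recommending $\hat a=\hat a_{\tau_\delta}$. Thresholds: $\zeta$ is the Riemann zeta function; $g_G(\lambda)=2\lambda-2\lambda\log(4\lambda)+\log\zeta(2\lambda)-\frac12\log(1-\lambda)$ and $\mathcal{C}_G(x)=\min_{\lambda\in(1/2,1]}\frac{g_G(\lambda)+x}{\lambda}$; for $k\in\mathbb{N}$, $c_k(n,m,\delta)=2\mathcal{C}_G\big(\frac12\log\frac{(K-1)\zeta(s)^2k^s}{\delta}\big)+2\log(4+\log n)+2\log(4+\log m)$; and $c_{\epsilon,k_1,k_2}(n,m,\delta)=2c_{k_1k_2}(n,m,\delta/2)+\frac{1}{n\epsilon^2}\big(\log\frac{2Kk_1^s\zeta(s)}{\delta}\big)^2+\frac{1}{m\epsilon^2}\big(\log\frac{2Kk_2^s\zeta(s)}{\delta}\big)^2$,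 where $c_{k_1k_2}$ denotes $c_k$ with $k=k_1k_2$. *)

theory Defs
  imports "HOL-Probability.Probability"
begin

definition zeta_r :: "real \<Rightarrow> real" where
  "zeta_r s = (\<Sum>n. 1 / real (Suc n) powr s)"

definition gG :: "real \<Rightarrow> real" where
  "gG l = 2 * l - 2 * l * ln (4 * l) + ln (zeta_r (2 * l)) - 1 / 2 * ln (1 - l)"

text \<open>The minimum over (1/2,1] in the paper: at l = 1 the term -1/2 log(1-l) is +infinity,
  so that point never realises the minimum; we take the infimum over the open interval
  (1/2,1) (Isabelle's ln 0 is not +infinity).\<close>
definition CG :: "real \<Rightarrow> real" where
  "CG x = (INF l\<in>{1/2<..<1}. (gG l + x) / l)"

definition c_k :: "nat \<Rightarrow> real \<Rightarrow> nat \<Rightarrow> real \<Rightarrow> real \<Rightarrow> real \<Rightarrow> real" where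
  "c_k K s k n m \<delta> =
     2 * CG (1 / 2 * ln (real (K - 1) * (zeta_r s)\<^sup>2 * real k powr s / \<delta>))
     + 2 * ln (4 + ln n) + 2 * ln (4 + ln m)"

definition c_eps :: "nat \<Rightarrow> real \<Rightarrow> real \<Rightarrow> nat \<Rightarrow> nat \<Rightarrow> real \<Rightarrow> real \<Rightarrow> real \<Rightarrow> real" where
  "c_eps K s \<epsilon> k1 k2 n m \<delta> =
     2 * c_k K s (k1 * k2) n m (\<delta> / 2)
     + 1 / (n * \<epsilon>\<^sup>2) * (ln (2 * real K * real k1 powr s * zeta_r s / \<delta>))\<^sup>2
     + 1 / (m * \<epsilon>\<^sup>2) * (ln (2 * real K * real k2 powr s * zeta_r s / \<delta>))\<^sup>2"

definition subgauss1 :: "real measure \<Rightarrow> bool" where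
  "subgauss1 N \<longleftrightarrow> prob_space N \<and> sets N = sets borel \<and> integrable N (\<lambda>x. x) \<and>
     (\<forall>l::real. integrable N (\<lambda>x. exp (l * (x - (\<integral>y. y \<partial>N)))) \<and>
        (\<integral>x. exp (l * (x - (\<integral>y. y \<partial>N))) \<partial>N) \<le> exp (l\<^sup>2 / 2))"

definition laplace1 :: "real \<Rightarrow> ennreal" where
  "laplace1 x = ennreal (exp (- \<bar>x\<bar>) / 2)"

section \<open>The algorithm, as a function of the pull sequence I (rounds are numbered from 1)\<close>

definition Ncnt :: "(nat \<Rightarrow> nat) \<Rightarrow> nat \<Rightarrow> nat \<Rightarrow> nat" where
  "Ncnt I n a = card {t. 1 \<le> t \<and> t < n \<and> I t = a}"

text \<open>Reward observed at round t: arm I t pulled for the (N_{t,I t}+1)-th time reads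
  entry number N_{t,I t} (0-based) of its reward table Z (I t).\<close>
definition Xr :: "(nat \<Rightarrow> nat) \<Rightarrow> (nat \<Rightarrow> nat \<Rightarrow> real) \<Rightarrow> nat \<Rightarrow> real" where
  "Xr I Z t = Z (I t) (Ncnt I t (I t))"

text \<open>List [T_1(a), ..., T_{k_{n,a}}(a)] of phase start times known at the start of round n
  (meaningful for n \<ge> K+1).\<close>
primrec phst :: "nat \<Rightarrow> (nat \<Rightarrow> nat) \<Rightarrow> nat \<Rightarrow> nat \<Rightarrow> nat list" where
  "phst K I a 0 = [K + 1]"
| "phst K I a (Suc n) =
     (if Suc n \<le> K + 1 then [K + 1]
      else (let ts = phst K I a n in
            if 2 * Ncnt I (last ts) a \<le> Ncnt I (Suc n) a then ts @ [Suc n] else ts))"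

definition kph :: "nat \<Rightarrow> (nat \<Rightarrow> nat) \<Rightarrow> nat \<Rightarrow> nat \<Rightarrow> nat" where
  "kph K I a n = length (phst K I a n)"

text \<open>T_k(a) for k \<le> k_{n,a}, with the convention T_0(a) = 1 (so that phase 1 consists of
  the initial pull of a).\<close>
definition Tph :: "nat \<Rightarrow> (nat \<Rightarrow> nat) \<Rightarrow> nat \<Rightarrow> nat \<Rightarrow> nat \<Rightarrow> nat" where
  "Tph K I a n k = (1 # phst K I a n) ! k"

definition Ntil :: "nat \<Rightarrow> (nat \<Rightarrow> nat) \<Rightarrow> nat \<Rightarrow> nat \<Rightarrow> nat \<Rightarrow> nat" where
  "Ntil K I a n k = Ncnt I (Tph K I a n k) a - Ncnt I (Tph K I a n (k - 1)) a"

definition muhat :: "nat \<Rightarrow> (nat \<Rightarrow> nat) \<Rightarrow> (nat \<Rightarrow> nat \<Rightarrow> real) \<Rightarrow> nat \<Rightarrow> nat \<Rightarrow> nat \<Rightarrow> real" where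
  "muhat K I Z a n k =
     (\<Sum>t\<in>{Tph K I a n (k - 1)..<Tph K I a n k}. if I t = a then Xr I Z t else 0)
     / real (Ntil K I a n k)"

text \<open>Private mean tilde mu_{k_{n,a},a} = hat mu + Y with Y_{k,a} = W k a / (epsilon tilde N_{k,a}),
  W k a standard Laplace, i.e. Y_{k,a} Laplace of scale 1/(epsilon tilde N_{k,a}).\<close>
definition mutil :: "nat \<Rightarrow> real \<Rightarrow> (nat \<Rightarrow> nat) \<Rightarrow> (nat \<Rightarrow> nat \<Rightarrow> real) \<Rightarrow> (nat \<Rightarrow> nat \<Rightarrow> real)
                      \<Rightarrow> nat \<Rightarrow> nat \<Rightarrow> real" where
  "mutil K \<epsilon> I Z W a n =
     (let k = kph K I a n in muhat K I Z a n k + W k a / (\<epsilon> * real (Ntil K I a n k)))"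

definition ahat :: "nat \<Rightarrow> real \<Rightarrow> (nat \<Rightarrow> nat) \<Rightarrow> (nat \<Rightarrow> nat \<Rightarrow> real) \<Rightarrow> (nat \<Rightarrow> nat \<Rightarrow> real)
                     \<Rightarrow> nat \<Rightarrow> nat" where
  "ahat K \<epsilon> I Z W n = (LEAST a. a < K \<and> (\<forall>b<K. mutil K \<epsilon> I Z W b n \<le> mutil K \<epsilon> I Z W a n))"

definition stops :: "nat \<Rightarrow> real \<Rightarrow> real \<Rightarrow> real \<Rightarrow> (nat \<Rightarrow> nat) \<Rightarrow> (nat \<Rightarrow> nat \<Rightarrow> real)
                      \<Rightarrow> (nat \<Rightarrow> nat \<Rightarrow> real) \<Rightarrow> nat \<Rightarrow> bool" where
  "stops K s \<epsilon> \<delta> I Z W n \<longleftrightarrow> K + 1 \<le> n \<and>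
     (let a = ahat K \<epsilon> I Z W n in
      \<forall>b<K. b \<noteq> a \<longrightarrow>
        (mutil K \<epsilon> I Z W a n - mutil K \<epsilon> I Z W b n)\<^sup>2
          / (1 / real (Ntil K I a n (kph K I a n)) + 1 / real (Ntil K I b n (kph K I b n)))
        \<ge> 2 * c_eps K s \<epsilon> (kph K I a n) (kph K I b n)
               (Ntil K I a n (kph K I a n)) (Ntil K I b n (kph K I b n)) \<delta>)"

definition Iof :: "nat list \<Rightarrow> nat \<Rightarrow> nat" where
  "Iof ps t = (if 1 \<le> t \<and> t \<le> length ps then ps ! (t - 1) else 0)"

text \<open>pulls m = [I_1, ..., I_m].  At round n the sampling rule pol n receives the internal
  randomness u, the past arms and rewards (I_t, X_t) for t < n and the private-mean
  vectors available at the starts of rounds K+1, ..., n.\<close>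
primrec pulls :: "nat \<Rightarrow> real \<Rightarrow> (nat \<Rightarrow> 'u \<Rightarrow> (nat \<times> real) list \<Rightarrow> (nat \<Rightarrow> real) list \<Rightarrow> nat)
                  \<Rightarrow> 'u \<Rightarrow> (nat \<Rightarrow> nat \<Rightarrow> real) \<Rightarrow> (nat \<Rightarrow> nat \<Rightarrow> real) \<Rightarrow> nat \<Rightarrow> nat list" where
  "pulls K \<epsilon> pol u Z W 0 = []"
| "pulls K \<epsilon> pol u Z W (Suc m) =
     (let ps = pulls K \<epsilon> pol u Z W m; I = Iof ps; n = Suc m in
      ps @ [pol n u (map (\<lambda>t. (I t, Xr I Z t)) [1..<n])
                    (map (\<lambda>t. (\<lambda>a. mutil K \<epsilon> I Z W a t)) [K + 1..<n + 1])])"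

definition algI :: "nat \<Rightarrow> real \<Rightarrow> (nat \<Rightarrow> 'u \<Rightarrow> (nat \<times> real) list \<Rightarrow> (nat \<Rightarrow> real) list \<Rightarrow> nat)
                  \<Rightarrow> 'u \<Rightarrow> (nat \<Rightarrow> nat \<Rightarrow> real) \<Rightarrow> (nat \<Rightarrow> nat \<Rightarrow> real) \<Rightarrow> nat \<Rightarrow> nat" where
  "algI K \<epsilon> pol u Z W t = Iof (pulls K \<epsilon> pol u Z W t) t"

definition wrong_stop :: "nat \<Rightarrow> real \<Rightarrow> real \<Rightarrow> real \<Rightarrow> (nat \<Rightarrow> nat) \<Rightarrow> (nat \<Rightarrow> nat \<Rightarrow> real)
                           \<Rightarrow> (nat \<Rightarrow> nat \<Rightarrow> real) \<Rightarrow> nat \<Rightarrow> bool" where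
  "wrong_stop K s \<epsilon> \<delta> I Z W astar \<longleftrightarrow>
     (\<exists>n. stops K s \<epsilon> \<delta> I Z W n) \<and>
     ahat K \<epsilon> I Z W (LEAST n. stops K s \<epsilon> \<delta> I Z W n) \<noteq> astar"

end

theory Submission
  imports Defs
begin

text \<open>A phase of an arm ends exactly when its pull count doubles, so phase \<open>k\<close> of arm \<open>a\<close>
  always averages the same block of its reward table, namely the rewards with (0-based) indices
  \<open>2^(k-2) ..< 2^(k-1)\<close> (index \<open>0\<close> for \<open>k = 1\<close>), whatever the sampling rule does. The private
  means are therefore fixed block averages plus independent Laplace noise. If the algorithm stops
  and recommends \<open>a \<noteq> a\<^sup>*\<close>, then either one of the Laplace variables is large, or the passed GLR
  test forces the centred difference of the block averages of \<open>a\<close> and \<open>a\<^sup>*\<close> to be large: the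
  Laplace terms of the threshold \<open>c_eps\<close> pay for the worst-case noise. Both are countable unions
  of events over arms and phases; Chernoff bounds for the sub-Gaussian block averages and the
  Laplace tail, weighted by \<open>k\<^sup>-\<^sup>s\<close> over the phases, give probability at most \<open>\<delta>/2\<close> each.\<close>

section \<open>Pull counts and phases\<close>

lemma Ncnt_Suc: "1 \<le> n \<Longrightarrow> Ncnt I (Suc n) a = Ncnt I n a + (if I n = a then 1 else 0)"
proof -
  assume n: "1 \<le> n"
  have fin: "finite {t. 1 \<le> t \<and> t < n \<and> I t = a}"
    by (rule finite_subset[of _ "{..<n}"]) auto
  show ?thesis
  proof (cases "I n = a")
    case True
    then have "{t. 1 \<le> t \<and> t < Suc n \<and> I t = a} = insert n {t. 1 \<le> t \<and> t < n \<and> I t = a}"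
      using n by auto
    then show ?thesis using fin True by (simp add: Ncnt_def)
  next
    case False
    then have "{t. 1 \<le> t \<and> t < Suc n \<and> I t = a} = {t. 1 \<le> t \<and> t < n \<and> I t = a}"
      by (auto simp: less_Suc_eq)
    then show ?thesis using False by (simp add: Ncnt_def)
  qed
qed

lemma Ncnt_mono: "n \<le> m \<Longrightarrow> Ncnt I n a \<le> Ncnt I m a"
  unfolding Ncnt_def by (rule card_mono) (auto intro: finite_subset[of _ "{..<m}"])

lemma Ncnt_after_initial_round_robin:
  assumes "bij_betw I {1..K} {0..<K}" and "a < K"
  shows "Ncnt I (K + 1) a = 1"
proof -
  have "a \<in> I ` {1..K}"
    using assms by (simp add: bij_betw_def)
  then obtain t where t: "t \<in> {1..K}" "I t = a"
    by blast
  have "inj_on I {1..K}"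
    using assms(1) by (simp add: bij_betw_def)
  then have "{t'. 1 \<le> t' \<and> t' < K + 1 \<and> I t' = a} = {t}"
    using t by (auto dest: inj_onD)
  then show ?thesis by (simp add: Ncnt_def)
qed

lemma phst_doubling:
  assumes "Ncnt I (K + 1) a = 1" and "K + 1 \<le> n"
  shows "phst K I a n \<noteq> [] \<and> (\<forall>i<length (phst K I a n). Ncnt I (phst K I a n ! i) a = 2 ^ i)
         \<and> Ncnt I n a < 2 * Ncnt I (last (phst K I a n)) a"
  using assms(2)
proof (induction n rule: dec_induct)
  case base
  then show ?case using assms(1) by simp
next
  case (step n)
  define ts where "ts = phst K I a n"
  have ne: "ts \<noteq> []" and pw: "\<forall>i<length ts. Ncnt I (ts ! i) a = 2 ^ i"
    and lt: "Ncnt I n a < 2 * Ncnt I (last ts) a"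
    using step.IH by (auto simp: ts_def)
  have last_count: "Ncnt I (last ts) a = 2 ^ (length ts - 1)"
    using pw ne by (simp add: last_conv_nth)
  have "Ncnt I (Suc n) a \<le> Ncnt I n a + 1"
    using Ncnt_Suc[of n I a] step.hyps by auto
  moreover have "phst K I a (Suc n) =
      (if 2 * Ncnt I (last ts) a \<le> Ncnt I (Suc n) a then ts @ [Suc n] else ts)"
    using step.hyps by (simp add: ts_def Let_def)
  ultimately show ?case
    using ne pw lt last_count by (cases "length ts") (auto simp: nth_append less_Suc_eq)
qed

definition phase_lo :: "nat \<Rightarrow> nat" where
  "phase_lo k = (if k = 1 then 0 else 2 ^ (k - 2))"

definition phase_hi :: "nat \<Rightarrow> nat" where
  "phase_hi k = 2 ^ (k - 1)"

definition phase_len :: "nat \<Rightarrow> nat" where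
  "phase_len k = phase_hi k - phase_lo k"

definition phase_mean :: "(nat \<Rightarrow> nat \<Rightarrow> real) \<Rightarrow> nat \<Rightarrow> nat \<Rightarrow> real" where
  "phase_mean Z a k = (\<Sum>j\<in>{phase_lo k..<phase_hi k}. Z a j) / real (phase_len k)"

lemma phase_len_pos: "1 \<le> k \<Longrightarrow> 1 \<le> phase_len k"
proof (cases "k = 1")
  case False
  assume "1 \<le> k"
  with False obtain m where "k = Suc (Suc m)"
    by (metis One_nat_def Suc_le_D le_SucE not0_implies_Suc)
  then show ?thesis by (simp add: phase_len_def phase_lo_def phase_hi_def)
qed (simp add: phase_len_def phase_lo_def phase_hi_def)

lemma sum_rewards_eq_sum_reward_table:
  assumes "1 \<le> T'" and "T' \<le> T"
  shows "(\<Sum>t\<in>{T'..<T}. if I t = a then Xr I Z t else 0) = (\<Sum>j\<in>{Ncnt I T' a..<Ncnt I T a}. Z a j)"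
  using assms(2)
proof (induction T rule: dec_induct)
  case base
  then show ?case by simp
next
  case (step T)
  then have "1 \<le> T" and "Ncnt I T' a \<le> Ncnt I T a"
    using assms(1) Ncnt_mono by auto
  then show ?case
    using step.IH Ncnt_Suc[of T I a] step.hyps by (auto simp: Xr_def)
qed

lemma Ncnt_phase_boundaries:
  assumes "Ncnt I (K + 1) a = 1" and "K + 1 \<le> n" and k: "k = kph K I a n"
  shows "1 \<le> k" and "Ncnt I (Tph K I a n k) a = phase_hi k"
    and "Ncnt I (Tph K I a n (k - 1)) a = phase_lo k" and "1 \<le> Tph K I a n (k - 1)"
proof -
  define ts where "ts = phst K I a n"
  have ne: "ts \<noteq> []" and pw: "\<forall>i<length ts. Ncnt I (ts ! i) a = 2 ^ i"
    using phst_doubling[OF assms(1,2)] by (auto simp: ts_def)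
  have len: "length ts = k"
    by (simp add: k kph_def ts_def)
  then show k1: "1 \<le> k"
    using ne by (cases ts) auto
  show "Ncnt I (Tph K I a n k) a = phase_hi k"
    using pw k1 len by (simp add: Tph_def phase_hi_def ts_def[symmetric] nth_Cons')
  show "Ncnt I (Tph K I a n (k - 1)) a = phase_lo k"
  proof (cases "k = 1")
    case False
    then show ?thesis
      using pw k1 len by (simp add: Tph_def phase_lo_def ts_def[symmetric] nth_Cons')
  qed (simp add: Tph_def phase_lo_def Ncnt_def)
  show "1 \<le> Tph K I a n (k - 1)"
  proof (cases "k = 1")
    case True
    then show ?thesis by (simp add: Tph_def)
  next
    case False
    then have "Ncnt I (Tph K I a n (k - 1)) a \<noteq> 0"
      using pw k1 len by (simp add: Tph_def ts_def[symmetric] nth_Cons')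
    then show ?thesis
      by (cases "Tph K I a n (k - 1)") (simp_all add: Ncnt_def)
  qed
qed

lemma mutil_eq_phase_mean:
  assumes "Ncnt I (K + 1) a = 1" and "K + 1 \<le> n" and k: "k = kph K I a n"
  shows "Ntil K I a n k = phase_len k"
    and "mutil K \<epsilon> I Z W a n = phase_mean Z a k + W k a / (\<epsilon> * real (phase_len k))"
proof -
  note bounds = Ncnt_phase_boundaries[OF assms]
  show len: "Ntil K I a n k = phase_len k"
    unfolding Ntil_def bounds(2,3) phase_len_def ..
  have "phase_lo k < phase_hi k"
    using phase_len_pos[OF bounds(1)] by (simp add: phase_len_def)
  then have "Tph K I a n (k - 1) \<le> Tph K I a n k"
    using Ncnt_mono[of "Tph K I a n k" "Tph K I a n (k - 1)" I a] bounds(2,3) by linarith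
  then have "muhat K I Z a n k = phase_mean Z a k"
    unfolding muhat_def phase_mean_def len
    using sum_rewards_eq_sum_reward_table[OF bounds(4)] bounds(2,3) by simp
  then show "mutil K \<epsilon> I Z W a n = phase_mean Z a k + W k a / (\<epsilon> * real (phase_len k))"
    using len by (simp add: mutil_def Let_def k)
qed

section \<open>Sub-Gaussian and Laplace tails\<close>

lemma (in prob_space) indep_subgaussian_sum_tail:
  fixes X :: "'i \<Rightarrow> 'a \<Rightarrow> real" and v :: "'i \<Rightarrow> real"
  assumes fin: "finite J" and ind: "indep_vars (\<lambda>_. borel) X J"
    and mgf: "\<And>i l. i \<in> J \<Longrightarrow> (\<integral>\<^sup>+\<omega>. ennreal (exp (l * X i \<omega>)) \<partial>M) \<le> ennreal (exp (l\<^sup>2 * v i / 2))"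
    and V: "0 < (\<Sum>i\<in>J. v i)" and t: "0 < t"
  shows "emeasure M {\<omega>\<in>space M. t \<le> (\<Sum>i\<in>J. X i \<omega>)} \<le> ennreal (exp (- t\<^sup>2 / (2 * (\<Sum>i\<in>J. v i))))"
proof -
  define d where "d = (\<Sum>i\<in>J. v i)"
  define l where "l = t / d"
  have d: "0 < d" and l: "0 < l"
    using V t by (simp_all add: d_def l_def)
  have "(\<lambda>\<omega>. \<Sum>i\<in>J. X i \<omega>) \<in> borel_measurable M"
    using ind by (intro borel_measurable_sum) (auto simp: indep_vars_def)
  then have "emeasure M {\<omega>\<in>space M. t \<le> (\<Sum>i\<in>J. X i \<omega>)} \<le>
      ennreal (exp (- l * t)) * (\<integral>\<^sup>+\<omega>. ennreal (exp (l * (\<Sum>i\<in>J. X i \<omega>))) * indicator (space M) \<omega> \<partial>M)"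
    by (intro Chernoff_ineq_nn_integral_ge l) auto
  also have "(\<integral>\<^sup>+\<omega>. ennreal (exp (l * (\<Sum>i\<in>J. X i \<omega>))) * indicator (space M) \<omega> \<partial>M) =
             (\<integral>\<^sup>+\<omega>. (\<Prod>i\<in>J. ennreal (exp (l * X i \<omega>))) \<partial>M)"
    by (intro nn_integral_cong) (simp add: sum_distrib_left exp_sum fin prod_ennreal)
  also have "\<dots> = (\<Prod>i\<in>J. \<integral>\<^sup>+\<omega>. ennreal (exp (l * X i \<omega>)) \<partial>M)"
    by (intro indep_vars_nn_integral fin indep_vars_compose2[OF ind]) auto
  also have "ennreal (exp (- l * t)) * \<dots> \<le> ennreal (exp (- l * t)) * (\<Prod>i\<in>J. ennreal (exp (l\<^sup>2 * v i / 2)))"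
    by (intro mult_left_mono prod_mono_ennreal mgf) auto
  also have "\<dots> = ennreal (exp (- l * t) * (\<Prod>i\<in>J. exp (l\<^sup>2 * v i / 2)))"
    by (simp add: prod_ennreal prod_nonneg flip: ennreal_mult)
  also have "exp (- l * t) * (\<Prod>i\<in>J. exp (l\<^sup>2 * v i / 2)) = exp (d * l\<^sup>2 / 2 - l * t)"
    by (simp add: exp_diff exp_minus sum_divide_distrib sum_distrib_left
        sum_distrib_right exp_sum fin divide_simps mult_ac d_def)
  also have "d * l\<^sup>2 / 2 - l * t = - t\<^sup>2 / (2 * d)"
    using d by (simp add: l_def field_simps power2_eq_square)
  finally show ?thesis
    by (simp add: d_def)
qed

lemma (in prob_space) subgauss1_mgf:
  assumes "X \<in> borel_measurable M" and sg: "subgauss1 (distr M borel X)"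
  shows "(\<integral>\<^sup>+\<omega>. ennreal (exp (l * (X \<omega> - (\<integral>y. y \<partial>distr M borel X)))) \<partial>M) \<le> ennreal (exp (l\<^sup>2 / 2))"
proof -
  define \<mu> where "\<mu> = (\<integral>y. y \<partial>distr M borel X)"
  have "(\<integral>\<^sup>+\<omega>. ennreal (exp (l * (X \<omega> - \<mu>))) \<partial>M) = (\<integral>\<^sup>+y. ennreal (exp (l * (y - \<mu>))) \<partial>distr M borel X)"
    using assms(1) by (simp add: nn_integral_distr)
  also have "\<dots> = ennreal (\<integral>y. exp (l * (y - \<mu>)) \<partial>distr M borel X)"
    using sg by (intro nn_integral_eq_integral) (auto simp: subgauss1_def \<mu>_def)
  also have "\<dots> \<le> ennreal (exp (l\<^sup>2 / 2))"
    using sg by (simp add: subgauss1_def \<mu>_def)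
  finally show ?thesis
    by (simp add: \<mu>_def)
qed

lemma (in prob_space) subgauss1_weighted_sum_tail:
  fixes X :: "'i \<Rightarrow> 'a \<Rightarrow> real" and c :: "'i \<Rightarrow> real" and J :: "'i set"
  defines "S \<equiv> \<lambda>\<omega>. \<Sum>i\<in>J. c i * (X i \<omega> - (\<integral>y. y \<partial>distr M borel (X i)))"
    and "V \<equiv> \<Sum>i\<in>J. (c i)\<^sup>2"
  assumes fin: "finite J" and ind: "indep_vars (\<lambda>_. borel) X J"
    and sg: "\<And>i. i \<in> J \<Longrightarrow> subgauss1 (distr M borel (X i))"
    and "0 < V" and "0 < x"
  shows "prob {\<omega>\<in>space M. 2 * V * x \<le> (S \<omega>)\<^sup>2} \<le> 2 * exp (- x)"
proof -
  define t where "t = sqrt (2 * V * x)"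
  have t: "0 < t" and t2: "t\<^sup>2 = 2 * V * x"
    using \<open>0 < V\<close> \<open>0 < x\<close> by (simp_all add: t_def)
  have meas: "X i \<in> borel_measurable M" if "i \<in> J" for i
    using ind that by (auto simp: indep_vars_def)
  have one_side: "prob {\<omega>\<in>space M. t \<le> \<sigma> * S \<omega>} \<le> exp (- x)" if "\<bar>\<sigma>\<bar> = 1" for \<sigma> :: real
  proof -
    define Y where "Y i \<omega> = \<sigma> * c i * (X i \<omega> - (\<integral>y. y \<partial>distr M borel (X i)))" for i \<omega>
    have "indep_vars (\<lambda>_. borel) Y J"
      unfolding Y_def by (rule indep_vars_compose2[OF ind]) auto
    moreover have "(\<integral>\<^sup>+\<omega>. ennreal (exp (l * Y i \<omega>)) \<partial>M) \<le> ennreal (exp (l\<^sup>2 * (c i)\<^sup>2 / 2))"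
      if "i \<in> J" for i l
    proof -
      have "\<sigma>\<^sup>2 = 1"
        using \<open>\<bar>\<sigma>\<bar> = 1\<close> by (metis power2_abs power_one)
      then have sq: "(l * \<sigma> * c i)\<^sup>2 = l\<^sup>2 * (c i)\<^sup>2"
        by (simp add: power_mult_distrib)
      have eq: "l * \<sigma> * c i * (X i \<omega> - (\<integral>y. y \<partial>distr M borel (X i))) = l * Y i \<omega>" for \<omega>
        by (simp add: Y_def mult_ac)
      from subgauss1_mgf[OF meas[OF that] sg[OF that], of "l * \<sigma> * c i"] show ?thesis
        by (simp only: sq eq)
    qed
    moreover have "\<sigma> * S \<omega> = (\<Sum>i\<in>J. Y i \<omega>)" for \<omega>
      by (simp add: S_def Y_def sum_distrib_left mult.assoc)
    ultimately have "emeasure M {\<omega>\<in>space M. t \<le> \<sigma> * S \<omega>} \<le> ennreal (exp (- t\<^sup>2 / (2 * V)))"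
      using indep_subgaussian_sum_tail[OF fin _ _ _ t, of Y] \<open>0 < V\<close> by (simp add: V_def)
    then show ?thesis
      using \<open>0 < V\<close> by (simp add: t2 emeasure_eq_measure)
  qed
  have "S \<in> borel_measurable M"
    using meas unfolding S_def by measurable
  then have sets: "{\<omega>\<in>space M. t \<le> \<sigma> * S \<omega>} \<in> events" for \<sigma>
    by measurable
  have "t\<^sup>2 \<le> y\<^sup>2 \<longleftrightarrow> t \<le> 1 * y \<or> t \<le> -1 * y" for y
    using t abs_le_square_iff[of t y] by (auto simp: abs_if split: if_splits)
  then have "prob {\<omega>\<in>space M. 2 * V * x \<le> (S \<omega>)\<^sup>2}
      \<le> prob ({\<omega>\<in>space M. t \<le> 1 * S \<omega>} \<union> {\<omega>\<in>space M. t \<le> -1 * S \<omega>})"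
    unfolding t2[symmetric] by (intro finite_measure_mono sets.Un sets) auto
  also have "\<dots> \<le> prob {\<omega>\<in>space M. t \<le> 1 * S \<omega>} + prob {\<omega>\<in>space M. t \<le> -1 * S \<omega>}"
    by (intro measure_Un_le sets)
  also have "\<dots> \<le> 2 * exp (- x)"
    using one_side[of 1] one_side[of "-1"] by simp
  finally show ?thesis .
qed

lemma (in prob_space) phase_mean_gap_tail:
  fixes Z :: "nat \<Rightarrow> nat \<Rightarrow> 'a \<Rightarrow> real" and F :: "bool \<times> nat \<times> nat \<Rightarrow> 'a \<Rightarrow> real"
  assumes ind: "indep_vars (\<lambda>_. borel) F IS"
    and FZ: "\<And>i j. F (True, i, j) = Z i j"
    and IS: "\<And>j. (True, a, j) \<in> IS" "\<And>j. (True, b, j) \<in> IS" and "a \<noteq> b"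
    and sg: "\<And>j. subgauss1 (distr M borel (Z a j))" "\<And>j. subgauss1 (distr M borel (Z b j))"
    and mean: "\<And>j. (\<integral>y. y \<partial>distr M borel (Z a j)) = \<mu>a" "\<And>j. (\<integral>y. y \<partial>distr M borel (Z b j)) = \<mu>b"
    and "1 \<le> k1" "1 \<le> k2" and "0 < x"
  shows "prob {\<omega>\<in>space M. 2 * (1 / real (phase_len k1) + 1 / real (phase_len k2)) * x \<le>
           ((phase_mean (\<lambda>i j. Z i j \<omega>) a k1 - \<mu>a) - (phase_mean (\<lambda>i j. Z i j \<omega>) b k2 - \<mu>b))\<^sup>2}
         \<le> 2 * exp (- x)"
proof -
  define n1 where "n1 = real (phase_len k1)"
  define n2 where "n2 = real (phase_len k2)"
  have n1: "1 \<le> n1" and n2: "1 \<le> n2"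
    using phase_len_pos \<open>1 \<le> k1\<close> \<open>1 \<le> k2\<close> by (simp_all add: n1_def n2_def)
  define B1 where "B1 = (\<lambda>j. (True, a, j)) ` {phase_lo k1..<phase_hi k1}"
  define B2 where "B2 = (\<lambda>j. (True, b, j)) ` {phase_lo k2..<phase_hi k2}"
  define c where "c p = (if fst (snd p) = a then 1 / n1 else - 1 / n2)" for p :: "bool \<times> nat \<times> nat"
  have disj: "B1 \<inter> B2 = {}"
    using \<open>a \<noteq> b\<close> by (auto simp: B1_def B2_def)
  have sum_B: "(\<Sum>p\<in>B1 \<union> B2. g p) = (\<Sum>j\<in>{phase_lo k1..<phase_hi k1}. g (True, a, j))
      + (\<Sum>j\<in>{phase_lo k2..<phase_hi k2}. g (True, b, j))" for g :: "_ \<Rightarrow> real"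
    using sum.union_disjoint[OF _ _ disj, of g]
    by (simp add: B1_def B2_def sum.reindex inj_on_def)
  have V: "(\<Sum>p\<in>B1 \<union> B2. (c p)\<^sup>2) = 1 / n1 + 1 / n2"
    using \<open>a \<noteq> b\<close> n1 n2 unfolding sum_B
    by (simp add: c_def phase_len_def n1_def n2_def power2_eq_square)
  have gap: "(\<Sum>p\<in>B1 \<union> B2. c p * (F p \<omega> - (\<integral>y. y \<partial>distr M borel (F p)))) =
      (phase_mean (\<lambda>i j. Z i j \<omega>) a k1 - \<mu>a) - (phase_mean (\<lambda>i j. Z i j \<omega>) b k2 - \<mu>b)" for \<omega>
    using \<open>a \<noteq> b\<close> n1 n2 unfolding sum_B
    by (simp add: c_def FZ mean phase_mean_def n1_def n2_def phase_len_def
        sum_subtractf sum_divide_distrib[symmetric] diff_divide_distrib sum_negf)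
  have "prob {\<omega>\<in>space M. 2 * (\<Sum>p\<in>B1 \<union> B2. (c p)\<^sup>2) * x
      \<le> (\<Sum>p\<in>B1 \<union> B2. c p * (F p \<omega> - (\<integral>y. y \<partial>distr M borel (F p))))\<^sup>2} \<le> 2 * exp (- x)"
  proof (rule subgauss1_weighted_sum_tail)
    show "indep_vars (\<lambda>_. borel) F (B1 \<union> B2)"
      using IS by (intro indep_vars_subset[OF ind]) (auto simp: B1_def B2_def)
    show "subgauss1 (distr M borel (F p))" if "p \<in> B1 \<union> B2" for p
      using that sg by (auto simp: B1_def B2_def FZ)
    show "0 < (\<Sum>p\<in>B1 \<union> B2. (c p)\<^sup>2)"
      unfolding V using n1 n2 by (simp add: add_pos_pos)
  qed (use \<open>0 < x\<close> in \<open>simp_all add: B1_def B2_def\<close>)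
  then show ?thesis
    unfolding V gap by (simp add: n1_def n2_def)
qed

lemma laplace1_tail:
  assumes "0 \<le> L"
  shows "emeasure (density lborel laplace1) {x. L < \<bar>x\<bar>} \<le> ennreal (exp (- L))"
proof -
  define f where "f x = ennreal (exp (- \<bar>x\<bar>) / 2)" for x :: real
  have f_meas: "f \<in> borel_measurable borel"
    unfolding f_def by measurable
  have "((\<lambda>x::real. exp (- x) / 2) has_integral (exp (- L) / 2)) {L..}"
    using has_integral_divide[OF has_integral_exp_minus_to_infinity[of 1 L], of 2] by simp
  then have "((\<lambda>x::real. exp (- \<bar>x\<bar>) / 2) has_integral (exp (- L) / 2)) {L..}"
    by (rule has_integral_spike_eq[THEN iffD1, OF negligible_empty, rotated]) (use assms in auto)
  then have right: "(\<integral>\<^sup>+x. f x * indicator {L..} x \<partial>lborel) = ennreal (exp (- L) / 2)"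
    unfolding f_def by (rule nn_integral_has_integral_lebesgue'[rotated]) auto
  have "(\<integral>\<^sup>+x. f x * indicator {..-L} x \<partial>lborel) = (\<integral>\<^sup>+x. f x * indicator {..-L} x \<partial>distr lborel borel uminus)"
    by (simp add: lborel_distr_uminus)
  also have "\<dots> = (\<integral>\<^sup>+x. f (- x) * indicator {..-L} (- x) \<partial>lborel)"
    using f_meas by (intro nn_integral_distr) auto
  also have "\<dots> = (\<integral>\<^sup>+x. f x * indicator {L..} x \<partial>lborel)"
    by (intro nn_integral_cong) (auto simp: f_def indicator_def)
  finally have left: "(\<integral>\<^sup>+x. f x * indicator {..-L} x \<partial>lborel) = ennreal (exp (- L) / 2)"
    using right by simp
  have "emeasure (density lborel laplace1) {x. L < \<bar>x\<bar>} = (\<integral>\<^sup>+x. f x * indicator {x. L < \<bar>x\<bar>} x \<partial>lborel)"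
    using f_meas by (subst emeasure_density) (auto simp: f_def laplace1_def[abs_def])
  also have "\<dots> \<le> (\<integral>\<^sup>+x. f x * indicator {L..} x + f x * indicator {..-L} x \<partial>lborel)"
    by (intro nn_integral_mono) (auto simp: indicator_def)
  also have "\<dots> = ennreal (exp (- L))"
    using f_meas by (subst nn_integral_add) (auto simp: left right simp flip: ennreal_plus)
  finally show ?thesis .
qed

lemma (in prob_space) laplace1_tail_prob:
  assumes "distributed M lborel X laplace1" and "0 \<le> L"
  shows "prob {\<omega>\<in>space M. L < \<bar>X \<omega>\<bar>} \<le> exp (- L)"
proof -
  have X_meas: "X \<in> measurable M lborel"
    using distributed_measurable[OF assms(1)] .
  have "emeasure M {\<omega>\<in>space M. L < \<bar>X \<omega>\<bar>} = emeasure (distr M lborel X) {x. L < \<bar>x\<bar>}"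
    using X_meas by (subst emeasure_distr) (auto intro!: arg_cong[where f = "emeasure M"])
  also have "\<dots> \<le> ennreal (exp (- L))"
    using laplace1_tail[OF assms(2)] distributed_distr_eq_density[OF assms(1)] by simp
  finally show ?thesis
    by (simp add: emeasure_eq_measure)
qed

section \<open>Thresholds\<close>

lemma zeta_r_sums: "1 < s \<Longrightarrow> (\<lambda>n. 1 / real (Suc n) powr s) sums zeta_r s"
proof -
  assume "1 < s"
  then have "summable (\<lambda>n. real (Suc n) powr (- s))"
    by (subst summable_Suc_iff) (simp add: summable_real_powr_iff)
  then show ?thesis
    by (simp add: zeta_r_def summable_sums powr_minus_divide)
qed

lemma zeta_r_ge_1: "1 < s \<Longrightarrow> 1 \<le> zeta_r s"
  using sums_le[OF _ sums_single[of 0 "\<lambda>n. 1 / real (Suc n) powr s"] zeta_r_sums]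
  by (simp split: if_splits)

lemma gG_ge:
  assumes "1 / 2 < l" and "l < 1"
  shows "2 * l - 2 * l * ln (4 * l) \<le> gG l"
proof -
  have "0 \<le> ln (zeta_r (2 * l))" and "ln (1 - l) \<le> 0"
    using assms zeta_r_ge_1[of "2 * l"] by simp_all
  then show ?thesis
    by (simp add: gG_def)
qed

lemma CG_ge: "0 \<le> x \<Longrightarrow> x + 2 - 2 * ln 4 \<le> CG x"
  unfolding CG_def
proof (rule cINF_greatest)
  show "{1/2<..<(1::real)} \<noteq> {}"
    by (auto intro!: exI[of _ "3/4"])
next
  fix l :: real
  assume x: "0 \<le> x" and "l \<in> {1/2<..<1}"
  then have l: "1 / 2 < l" "l < 1" by auto
  have "(2 * l - 2 * l * ln (4 * l) + x) / l \<le> (gG l + x) / l"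
    using gG_ge[OF l] l by (intro divide_right_mono) auto
  moreover have "(2 * l - 2 * l * ln (4 * l) + x) / l = 2 - 2 * ln (4 * l) + x / l"
    using l by (simp add: field_simps)
  moreover have "ln (4 * l) \<le> ln 4" and "x \<le> x / l"
    using l x by (simp_all add: field_simps mult_left_le_one_le)
  ultimately show "x + 2 - 2 * ln 4 \<le> (gG l + x) / l"
    by linarith
qed

text \<open>The levels are chosen so that \<open>|W k a|\<close> exceeds \<open>noise_level K s \<delta> k\<close> with probability
  \<open>\<delta> / (2 K \<zeta>(s) k\<^sup>s)\<close>, and a gap of phase means exceeds the sub-Gaussian scale of
  \<open>gap_level K s \<delta> k1 k2\<close> with probability \<open>\<delta> / (2 (K - 1) \<zeta>(s)\<^sup>2 k1\<^sup>s k2\<^sup>s)\<close>.\<close>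

definition noise_level :: "nat \<Rightarrow> real \<Rightarrow> real \<Rightarrow> nat \<Rightarrow> real" where
  "noise_level K s \<delta> k = ln (2 * real K * real k powr s * zeta_r s / \<delta>)"

definition gap_level :: "nat \<Rightarrow> real \<Rightarrow> real \<Rightarrow> nat \<Rightarrow> nat \<Rightarrow> real" where
  "gap_level K s \<delta> k1 k2 = ln (4 * real (K - 1) * (zeta_r s)\<^sup>2 * real k1 powr s * real k2 powr s / \<delta>)"

lemma noise_level_bounds:
  assumes "0 < K" and "0 < \<delta>" "\<delta> < 1" and "1 < s" and "1 \<le> k"
  shows "0 \<le> noise_level K s \<delta> k"
    and "exp (- noise_level K s \<delta> k) = \<delta> / (2 * real K * zeta_r s) * (1 / real k powr s)"
proof -
  define X where "X = 2 * real K * real k powr s * zeta_r s"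
  have level: "noise_level K s \<delta> k = ln (X / \<delta>)"
    by (simp only: noise_level_def X_def)
  have "1 * 1 * 1 * 1 \<le> X"
    unfolding X_def using assms zeta_r_ge_1[of s]
    by (intro mult_mono) (auto intro!: ge_one_powr_ge_zero)
  then have "1 \<le> X / \<delta>"
    using assms(2,3) by (simp add: le_divide_eq)
  then show "0 \<le> noise_level K s \<delta> k"
    unfolding level by simp
  have "exp (- noise_level K s \<delta> k) = \<delta> / X"
    unfolding level using \<open>1 \<le> X / \<delta>\<close> assms(2) by (simp add: exp_minus)
  also have "\<dots> = \<delta> / (2 * real K * zeta_r s) * (1 / real k powr s)"
    by (simp add: X_def)
  finally show "exp (- noise_level K s \<delta> k) = \<delta> / (2 * real K * zeta_r s) * (1 / real k powr s)" .
qed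

lemma gap_level_bounds:
  assumes "2 \<le> K" and "0 < \<delta>" "\<delta> < 1" and "1 < s" and "1 \<le> k1" "1 \<le> k2"
  shows "0 < gap_level K s \<delta> k1 k2"
    and "2 * exp (- gap_level K s \<delta> k1 k2)
           = \<delta> / (2 * real (K - 1) * (zeta_r s)\<^sup>2) * (1 / real k1 powr s) * (1 / real k2 powr s)"
proof -
  define X where "X = 4 * real (K - 1) * (zeta_r s)\<^sup>2 * real k1 powr s * real k2 powr s"
  have level: "gap_level K s \<delta> k1 k2 = ln (X / \<delta>)"
    by (simp only: gap_level_def X_def)
  have "1 * 1 * 1 * 1 * 1 \<le> X"
    unfolding X_def using assms zeta_r_ge_1[of s]
    by (intro mult_mono) (auto simp: one_le_power intro!: ge_one_powr_ge_zero)
  then have "1 < X / \<delta>"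
    using assms(2,3) by (simp add: less_divide_eq)
  then show "0 < gap_level K s \<delta> k1 k2"
    unfolding level by simp
  have "2 * exp (- gap_level K s \<delta> k1 k2) = 2 * \<delta> / X"
    unfolding level using \<open>1 < X / \<delta>\<close> assms(2) by (simp add: exp_minus)
  also have "\<dots> = \<delta> / (2 * real (K - 1) * (zeta_r s)\<^sup>2) * (1 / real k1 powr s) * (1 / real k2 powr s)"
    by (simp add: X_def)
  finally show "2 * exp (- gap_level K s \<delta> k1 k2)
           = \<delta> / (2 * real (K - 1) * (zeta_r s)\<^sup>2) * (1 / real k1 powr s) * (1 / real k2 powr s)" .
qed

lemma gap_level_le_c_k:
  assumes "2 \<le> K" and "1 < s" and "0 < \<delta>" "\<delta> < 1" and "1 \<le> k1" "1 \<le> k2"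
    and "1 \<le> n" "1 \<le> m"
  shows "gap_level K s \<delta> k1 k2 \<le> c_k K s (k1 * k2) n m (\<delta> / 2)"
proof -
  define A where "A = real (K - 1) * (zeta_r s)\<^sup>2 * real (k1 * k2) powr s"
  define X where "X = A / (\<delta> / 2)"
  have "1 \<le> real k1 * real k2"
    using assms(5,6) mult_mono[of 1 "real k1" 1 "real k2"] by simp
  then have "1 * 1 * 1 \<le> A"
    unfolding A_def using assms(1,2) zeta_r_ge_1[of s]
    by (intro mult_mono) (auto simp: one_le_power intro!: ge_one_powr_ge_zero)
  then have X: "1 \<le> X"
    using assms(3,4) by (simp add: X_def le_divide_eq)
  have "4 * real (K - 1) * (zeta_r s)\<^sup>2 * real k1 powr s * real k2 powr s / \<delta> = 2 * X"
    using assms(3) by (simp add: X_def A_def powr_mult field_simps)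
  then have "gap_level K s \<delta> k1 k2 = ln 2 + ln X"
    unfolding gap_level_def using X by (simp only: ln_mult) simp_all
  also have "\<dots> \<le> 4 + ln X"
    using ln_le_minus_one[of 2] by simp
  also have "\<dots> \<le> 2 * CG (1 / 2 * ln X) + 2 * ln 4 + 2 * ln 4"
    using CG_ge[of "1 / 2 * ln X"] ln_ge_zero[OF X] by simp
  also have "\<dots> \<le> c_k K s (k1 * k2) n m (\<delta> / 2)"
  proof -
    have "0 \<le> ln n" and "0 \<le> ln m"
      using assms(7,8) by simp_all
    then have "ln 4 \<le> ln (4 + ln n)" and "ln 4 \<le> ln (4 + ln m)"
      by simp_all
    then show ?thesis
      by (simp add: c_k_def X_def A_def)
  qed
  finally show ?thesis .
qed

section \<open>A wrong stop forces a large deviation\<close>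

lemma sum_sq_le_harmonic_weighted:
  fixes n1 n2 v1 v2 :: real
  assumes "0 < n1" and "0 < n2"
  shows "(v1 + v2)\<^sup>2 \<le> (1 / n1 + 1 / n2) * (n1 * v1\<^sup>2 + n2 * v2\<^sup>2)"
proof -
  have "(1 / n1 + 1 / n2) * (n1 * v1\<^sup>2 + n2 * v2\<^sup>2) - (v1 + v2)\<^sup>2 = (n1 * v1 - n2 * v2)\<^sup>2 / (n1 * n2)"
    using assms by (simp add: field_simps power2_eq_square)
  also have "\<dots> \<ge> 0"
    using assms by simp
  finally show ?thesis
    by simp
qed

lemma glr_stop_imp_centered_gap:
  fixes m1 m2 W1 W2 \<mu>1 \<mu>2 n1 n2 \<epsilon> c L1 L2 :: real
  defines "p1 \<equiv> m1 + W1 / (\<epsilon> * n1)" and "p2 \<equiv> m2 + W2 / (\<epsilon> * n2)"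
  assumes "1 \<le> n1" "1 \<le> n2" "0 < \<epsilon>"
    and order: "p2 \<le> p1"
    and stop: "2 * (2 * c + 1 / (n1 * \<epsilon>\<^sup>2) * L1\<^sup>2 + 1 / (n2 * \<epsilon>\<^sup>2) * L2\<^sup>2) \<le> (p1 - p2)\<^sup>2 / (1 / n1 + 1 / n2)"
    and "\<bar>W1\<bar> \<le> L1" "\<bar>W2\<bar> \<le> L2" and "\<mu>1 < \<mu>2"
  shows "2 * (1 / n1 + 1 / n2) * c \<le> ((m1 - \<mu>1) - (m2 - \<mu>2))\<^sup>2"
proof -
  define \<sigma> where "\<sigma> = 1 / n1 + 1 / n2"
  define v1 where "v1 = L1 / (\<epsilon> * n1)"
  define v2 where "v2 = L2 / (\<epsilon> * n2)"
  define Y where "Y = W1 / (\<epsilon> * n1) - W2 / (\<epsilon> * n2)"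
  define G where "G = (m1 - \<mu>1) - (m2 - \<mu>2)"
  have \<sigma>: "0 < \<sigma>"
    using assms(3,4) by (simp add: \<sigma>_def add_pos_pos)
  have noise: "2 * c + 1 / (n1 * \<epsilon>\<^sup>2) * L1\<^sup>2 + 1 / (n2 * \<epsilon>\<^sup>2) * L2\<^sup>2 = 2 * c + (n1 * v1\<^sup>2 + n2 * v2\<^sup>2)"
    using assms(3,4,5) by (simp add: v1_def v2_def power2_eq_square field_simps)
  have "\<bar>W1\<bar> / (\<epsilon> * n1) \<le> v1" and "\<bar>W2\<bar> / (\<epsilon> * n2) \<le> v2"
    using assms(3-5,8,9) by (auto simp: v1_def v2_def intro!: divide_right_mono)
  then have "\<bar>Y\<bar> \<le> v1 + v2"
    using assms(3-5) abs_triangle_ineq4[of "W1 / (\<epsilon> * n1)" "W2 / (\<epsilon> * n2)"]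
    by (simp add: Y_def abs_divide)
  then have "Y\<^sup>2 \<le> (v1 + v2)\<^sup>2"
    by (metis abs_ge_zero order_trans power2_abs power_mono)
  also have "\<dots> \<le> \<sigma> * (n1 * v1\<^sup>2 + n2 * v2\<^sup>2)"
    unfolding \<sigma>_def using assms(3,4) by (intro sum_sq_le_harmonic_weighted) simp_all
  finally have Y: "Y\<^sup>2 \<le> \<sigma> * (n1 * v1\<^sup>2 + n2 * v2\<^sup>2)" .
  have "\<sigma> * (4 * c + 2 * (n1 * v1\<^sup>2 + n2 * v2\<^sup>2)) \<le> (p1 - p2)\<^sup>2"
    using stop \<sigma> unfolding noise \<sigma>_def[symmetric] by (simp add: le_divide_eq algebra_simps)
  also have "(p1 - p2)\<^sup>2 \<le> (G + Y)\<^sup>2"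
    using order \<open>\<mu>1 < \<mu>2\<close> by (intro power_mono) (simp_all add: p1_def p2_def G_def Y_def)
  also have "\<dots> \<le> 2 * G\<^sup>2 + 2 * Y\<^sup>2"
    using sum_squares_ge_zero[of "G - Y" 0] by (simp add: power2_eq_square algebra_simps)
  finally have "\<sigma> * (4 * c + 2 * (n1 * v1\<^sup>2 + n2 * v2\<^sup>2)) \<le> 2 * G\<^sup>2 + 2 * Y\<^sup>2" .
  then have "2 * (\<sigma> * c) \<le> G\<^sup>2"
    using Y by (simp add: distrib_left)
  then show ?thesis
    by (simp only: G_def \<sigma>_def mult.assoc)
qed

lemma ahat_maximal:
  assumes "0 < K"
  shows "ahat K \<epsilon> I Z W n < K"
    and "\<forall>b<K. mutil K \<epsilon> I Z W b n \<le> mutil K \<epsilon> I Z W (ahat K \<epsilon> I Z W n) n"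
proof -
  define f where "f b = mutil K \<epsilon> I Z W b n" for b
  have "Max (f ` {..<K}) \<in> f ` {..<K}"
    using assms by (intro Max_in) auto
  then obtain a where "a < K" and "f a = Max (f ` {..<K})"
    by auto
  then have "\<exists>a<K. \<forall>b<K. f b \<le> f a"
    by (auto intro: Max_ge)
  then have "ahat K \<epsilon> I Z W n < K \<and> (\<forall>b<K. f b \<le> f (ahat K \<epsilon> I Z W n))"
    unfolding ahat_def f_def[symmetric] by (rule LeastI_ex)
  then show "ahat K \<epsilon> I Z W n < K" and "\<forall>b<K. mutil K \<epsilon> I Z W b n \<le> mutil K \<epsilon> I Z W (ahat K \<epsilon> I Z W n) n"
    by (simp_all add: f_def)
qed

definition laplace_noise_large :: "nat \<Rightarrow> real \<Rightarrow> real \<Rightarrow> (nat \<Rightarrow> nat \<Rightarrow> real) \<Rightarrow> bool" where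
  "laplace_noise_large K s \<delta> W \<longleftrightarrow> (\<exists>k\<ge>1. \<exists>a<K. noise_level K s \<delta> k < \<bar>W k a\<bar>)"

definition phase_gap_large ::
    "nat \<Rightarrow> real \<Rightarrow> real \<Rightarrow> (nat \<Rightarrow> real) \<Rightarrow> (nat \<Rightarrow> nat \<Rightarrow> real) \<Rightarrow> nat \<Rightarrow> bool" where
  "phase_gap_large K s \<delta> \<mu> Z astar \<longleftrightarrow> (\<exists>a<K. a \<noteq> astar \<and> (\<exists>k1\<ge>1. \<exists>k2\<ge>1.
     2 * (1 / real (phase_len k1) + 1 / real (phase_len k2)) * gap_level K s \<delta> k1 k2
       \<le> ((phase_mean Z a k1 - \<mu> a) - (phase_mean Z astar k2 - \<mu> astar))\<^sup>2))"

lemma wrong_stopE: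
  assumes "0 < K" and "astar < K" and "wrong_stop K s \<epsilon> \<delta> I Z W astar"
  obtains n a where "K + 1 \<le> n" and "a < K" and "a \<noteq> astar"
    and "mutil K \<epsilon> I Z W astar n \<le> mutil K \<epsilon> I Z W a n"
    and "2 * c_eps K s \<epsilon> (kph K I a n) (kph K I astar n)
            (Ntil K I a n (kph K I a n)) (Ntil K I astar n (kph K I astar n)) \<delta>
         \<le> (mutil K \<epsilon> I Z W a n - mutil K \<epsilon> I Z W astar n)\<^sup>2
            / (1 / real (Ntil K I a n (kph K I a n)) + 1 / real (Ntil K I astar n (kph K I astar n)))"
proof -
  define n where "n = (LEAST n. stops K s \<epsilon> \<delta> I Z W n)"
  define a where "a = ahat K \<epsilon> I Z W n"
  have "stops K s \<epsilon> \<delta> I Z W n" and "a \<noteq> astar"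
    using assms(3) unfolding wrong_stop_def n_def a_def by (auto intro: LeastI_ex)
  moreover have "a < K" and "mutil K \<epsilon> I Z W astar n \<le> mutil K \<epsilon> I Z W a n"
    using ahat_maximal[OF assms(1)] assms(2) by (auto simp: a_def)
  ultimately show ?thesis
    using that assms(2) unfolding stops_def a_def[symmetric] Let_def by blast
qed

lemma wrong_stop_imp_large_deviation:
  fixes \<mu> :: "nat \<Rightarrow> real"
  assumes "0 < K" and init: "\<forall>a<K. Ncnt I (K + 1) a = 1" and "astar < K"
    and best: "\<forall>a<K. a \<noteq> astar \<longrightarrow> \<mu> a < \<mu> astar"
    and "0 < \<epsilon>" and "0 < \<delta>" "\<delta> < 1" and "1 < s"
    and "wrong_stop K s \<epsilon> \<delta> I Z W astar"
  shows "laplace_noise_large K s \<delta> W \<or> phase_gap_large K s \<delta> \<mu> Z astar"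
proof -
  obtain n a where "K + 1 \<le> n" "a < K" "a \<noteq> astar"
    and a_max: "mutil K \<epsilon> I Z W astar n \<le> mutil K \<epsilon> I Z W a n"
    and stop: "2 * c_eps K s \<epsilon> (kph K I a n) (kph K I astar n)
            (Ntil K I a n (kph K I a n)) (Ntil K I astar n (kph K I astar n)) \<delta>
         \<le> (mutil K \<epsilon> I Z W a n - mutil K \<epsilon> I Z W astar n)\<^sup>2
            / (1 / real (Ntil K I a n (kph K I a n)) + 1 / real (Ntil K I astar n (kph K I astar n)))"
    using wrong_stopE[OF \<open>0 < K\<close> \<open>astar < K\<close> \<open>wrong_stop K s \<epsilon> \<delta> I Z W astar\<close>] .
  define k1 where "k1 = kph K I a n"
  define k2 where "k2 = kph K I astar n"
  note phase_a = Ncnt_phase_boundaries(1)[OF _ \<open>K + 1 \<le> n\<close> k1_def]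
    mutil_eq_phase_mean[OF _ \<open>K + 1 \<le> n\<close> k1_def]
  note phase_astar = Ncnt_phase_boundaries(1)[OF _ \<open>K + 1 \<le> n\<close> k2_def]
    mutil_eq_phase_mean[OF _ \<open>K + 1 \<le> n\<close> k2_def]
  have k: "1 \<le> k1" "1 \<le> k2" and n1: "1 \<le> real (phase_len k1)" and n2: "1 \<le> real (phase_len k2)"
    using phase_a phase_astar init \<open>a < K\<close> \<open>astar < K\<close> phase_len_pos by auto
  show ?thesis
  proof (cases "noise_level K s \<delta> k1 < \<bar>W k1 a\<bar> \<or> noise_level K s \<delta> k2 < \<bar>W k2 astar\<bar>")
    case True
    then show ?thesis
      using \<open>a < K\<close> \<open>astar < K\<close> k unfolding laplace_noise_large_def by blast
  next
    case False
    have "2 * (1 / real (phase_len k1) + 1 / real (phase_len k2)) * gap_level K s \<delta> k1 k2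
        \<le> 2 * (1 / real (phase_len k1) + 1 / real (phase_len k2)) *
            c_k K s (k1 * k2) (phase_len k1) (phase_len k2) (\<delta> / 2)"
      using \<open>a < K\<close> \<open>astar < K\<close> \<open>a \<noteq> astar\<close> n1 n2 k assms(6-8)
      by (intro mult_left_mono gap_level_le_c_k) auto
    also have "\<dots> \<le> ((phase_mean Z a k1 - \<mu> a) - (phase_mean Z astar k2 - \<mu> astar))\<^sup>2"
      using stop[folded k1_def k2_def] a_max False best \<open>a < K\<close> \<open>a \<noteq> astar\<close> init \<open>astar < K\<close>
      by (intro glr_stop_imp_centered_gap[OF n1 n2 \<open>0 < \<epsilon>\<close>])
        (auto simp: phase_a phase_astar c_eps_def noise_level_def)
    finally show ?thesis
      using \<open>a < K\<close> \<open>a \<noteq> astar\<close> k unfolding phase_gap_large_def by blast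
  qed
qed

section \<open>Union bounds\<close>

text \<open>Stated with \<open>Suc 0\<close>, the simp normal form of \<open>1 :: nat\<close> in \<open>\<exists>k\<ge>1\<close>.\<close>

lemma ex_Suc_0_le_conv: "(\<exists>k. Suc 0 \<le> k \<and> P k) \<longleftrightarrow> (\<exists>k. P (Suc k))"
proof
  assume "\<exists>k. Suc 0 \<le> k \<and> P k"
  then obtain k where "Suc 0 \<le> k" "P k"
    by blast
  then show "\<exists>k. P (Suc k)"
    by (cases k) auto
qed auto

lemma (in finite_measure) measure_UN_le_sums:
  assumes "range A \<subseteq> sets M" and "\<And>k. measure M (A k) \<le> f k" and "f sums L"
  shows "measure M (\<Union>k. A k) \<le> L"
proof -
  have "norm (measure M (A k)) \<le> f k" for k
    using assms(2)[of k] by simp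
  then have summable: "summable (\<lambda>k. measure M (A k))"
    by (rule summable_comparison_test'[OF sums_summable[OF assms(3)]])
  have "measure M (\<Union>k. A k) \<le> (\<Sum>k. measure M (A k))"
    using assms(1) summable by (rule finite_measure_subadditive_countably)
  also have "\<dots> \<le> L"
    using assms(2,3) summable by (auto simp: sums_iff intro: suminf_le)
  finally show ?thesis .
qed

lemma (in finite_measure) measure_UN2_le_sums:
  assumes "\<And>k1 k2. A k1 k2 \<in> sets M" and "\<And>k1 k2. measure M (A k1 k2) \<le> C * f k1 * f k2"
    and "f sums L"
  shows "measure M (\<Union>k1. \<Union>k2. A k1 k2) \<le> C * L * L"
proof (rule measure_UN_le_sums)
  show "range (\<lambda>k1. \<Union>k2. A k1 k2) \<subseteq> sets M"
    using assms(1) by auto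
  show "measure M (\<Union>k2. A k1 k2) \<le> C * f k1 * L" for k1
    using assms by (intro measure_UN_le_sums[where f = "\<lambda>k2. C * f k1 * f k2"] sums_mult) auto
  show "(\<lambda>k1. C * f k1 * L) sums (C * L * L)"
    using assms(3) by (intro sums_mult sums_mult2)
qed

lemma (in finite_measure) measure_finite_UN_le:
  assumes "finite I" and "\<And>i. i \<in> I \<Longrightarrow> A i \<in> sets M" and "\<And>i. i \<in> I \<Longrightarrow> measure M (A i) \<le> c"
  shows "measure M (\<Union>i\<in>I. A i) \<le> real (card I) * c"
  using measure_UNION_le[OF assms(1,2)] sum_bounded_above[of I "\<lambda>i. measure M (A i)" c] assms(3)
  by fastforce

lemma (in prob_space) laplace_noise_large_prob:
  assumes "0 < K" and "0 < \<delta>" "\<delta> < 1" and "1 < s"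
    and Wdist: "\<forall>k\<ge>1. \<forall>a<K. distributed M lborel (W k a) laplace1"
  defines "E \<equiv> {\<omega>\<in>space M. laplace_noise_large K s \<delta> (\<lambda>k a. W k a \<omega>)}"
  shows "E \<in> events" and "prob E \<le> \<delta> / 2"
proof -
  define B where "B k a = {\<omega>\<in>space M. noise_level K s \<delta> (Suc k) < \<bar>W (Suc k) a \<omega>\<bar>}" for k a
  have E: "E = (\<Union>k. \<Union>a\<in>{..<K}. B k a)"
    by (auto simp: E_def B_def laplace_noise_large_def ex_Suc_0_le_conv)
  have "W (Suc k) a \<in> borel_measurable M" if "a < K" for k a
    using distributed_measurable[OF Wdist[rule_format, of "Suc k" a]] that by simp
  then have B_meas: "B k a \<in> events" if "a < K" for k a
    using that unfolding B_def by measurable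
  then show "E \<in> events"
    unfolding E by auto
  have "prob (B k a) \<le> \<delta> / (2 * real K * zeta_r s) * (1 / real (Suc k) powr s)" if "a < K" for k a
  proof -
    note level = noise_level_bounds[OF assms(1-4), of "Suc k"]
    have "prob (B k a) \<le> exp (- noise_level K s \<delta> (Suc k))"
      unfolding B_def using level(1) Wdist that by (intro laplace1_tail_prob) auto
    then show ?thesis
      using level(2) by simp
  qed
  then have "prob (\<Union>a\<in>{..<K}. B k a) \<le> real (card {..<K}) * (\<delta> / (2 * real K * zeta_r s) * (1 / real (Suc k) powr s))" for k
    using B_meas by (intro measure_finite_UN_le) auto
  then have "prob (\<Union>a\<in>{..<K}. B k a) \<le> \<delta> / (2 * zeta_r s) * (1 / real (Suc k) powr s)" for k
    using \<open>0 < K\<close> by (simp add: mult.assoc)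
  then have "prob E \<le> \<delta> / (2 * zeta_r s) * zeta_r s"
    unfolding E using B_meas zeta_r_sums[OF \<open>1 < s\<close>]
    by (intro measure_UN_le_sums[where f = "\<lambda>k. \<delta> / (2 * zeta_r s) * (1 / real (Suc k) powr s)"] sums_mult)
      auto
  then show "prob E \<le> \<delta> / 2"
    using zeta_r_ge_1[OF \<open>1 < s\<close>] by simp
qed

lemma (in prob_space) phase_gap_large_prob:
  fixes Z :: "nat \<Rightarrow> nat \<Rightarrow> 'a \<Rightarrow> real" and F :: "bool \<times> nat \<times> nat \<Rightarrow> 'a \<Rightarrow> real"
  assumes "0 < \<delta>" "\<delta> < 1" and "1 < s" and "astar < K"
    and ind: "indep_vars (\<lambda>_. borel) F IS" and FZ: "\<And>i j. F (True, i, j) = Z i j"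
    and IS: "\<And>a j. a < K \<Longrightarrow> (True, a, j) \<in> IS"
    and subg: "\<forall>a<K. subgauss1 (\<nu> a)" and Zdist: "\<forall>a<K. \<forall>j. distr M borel (Z a j) = \<nu> a"
  defines "E \<equiv> {\<omega>\<in>space M. phase_gap_large K s \<delta> (\<lambda>a. \<integral>x. x \<partial>\<nu> a) (\<lambda>a j. Z a j \<omega>) astar}"
  shows "E \<in> events" and "prob E \<le> \<delta> / 2"
proof -
  define A where "A = {a. a < K \<and> a \<noteq> astar}"
  define G where "G a k1 k2 = {\<omega>\<in>space M.
      2 * (1 / real (phase_len k1) + 1 / real (phase_len k2)) * gap_level K s \<delta> k1 k2
        \<le> ((phase_mean (\<lambda>a j. Z a j \<omega>) a k1 - (\<integral>x. x \<partial>\<nu> a))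
            - (phase_mean (\<lambda>a j. Z a j \<omega>) astar k2 - (\<integral>x. x \<partial>\<nu> astar)))\<^sup>2}" for a k1 k2
  define f where "f = (\<lambda>k. 1 / real (Suc k) powr s)"
  have E: "E = (\<Union>k1. \<Union>k2. \<Union>a\<in>A. G a (Suc k1) (Suc k2))"
    by (auto simp: E_def A_def G_def phase_gap_large_def ex_Suc_0_le_conv)
  have "Z a j \<in> borel_measurable M" if "a < K" for a j
    using ind IS[OF that] unfolding indep_vars_def FZ[symmetric] by auto
  then have G_meas: "G a k1 k2 \<in> events" if "a < K" for a k1 k2
    using that \<open>astar < K\<close> unfolding G_def phase_mean_def by measurable
  then show "E \<in> events"
    unfolding E A_def by auto
  have "A = {..<K} - {astar}"
    by (auto simp: A_def)
  then have card_A: "card A = K - 1"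
    using \<open>astar < K\<close> by simp
  have G_prob: "prob (G a (Suc k1) (Suc k2)) \<le> \<delta> / (2 * real (K - 1) * (zeta_r s)\<^sup>2) * f k1 * f k2"
    if "a \<in> A" for a k1 k2
  proof -
    have "2 \<le> K"
      using that \<open>astar < K\<close> by (auto simp: A_def)
    note level = gap_level_bounds[OF this assms(1-3), of "Suc k1" "Suc k2"]
    have "prob (G a (Suc k1) (Suc k2)) \<le> 2 * exp (- gap_level K s \<delta> (Suc k1) (Suc k2))"
      using that subg Zdist \<open>astar < K\<close> IS level(1) unfolding G_def
      by (intro phase_mean_gap_tail[OF ind FZ]) (auto simp: A_def)
    also have "\<dots> = \<delta> / (2 * real (K - 1) * (zeta_r s)\<^sup>2) * f k1 * f k2"
      using level(2) by (simp add: f_def)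
    finally show ?thesis .
  qed
  have "prob (\<Union>a\<in>A. G a (Suc k1) (Suc k2)) \<le> \<delta> / (2 * (zeta_r s)\<^sup>2) * f k1 * f k2" for k1 k2
  proof -
    have "prob (\<Union>a\<in>A. G a (Suc k1) (Suc k2))
        \<le> real (card A) * (\<delta> / (2 * real (K - 1) * (zeta_r s)\<^sup>2) * f k1 * f k2)"
      using G_meas G_prob by (intro measure_finite_UN_le) (auto simp: A_def)
    also have "m * (\<delta> / (2 * m * (zeta_r s)\<^sup>2) * f k1 * f k2) \<le> \<delta> / (2 * (zeta_r s)\<^sup>2) * f k1 * f k2"
      for m :: real
      using assms(1) by (cases "m = 0") (simp_all add: f_def)
    then have "real (card A) * (\<delta> / (2 * real (K - 1) * (zeta_r s)\<^sup>2) * f k1 * f k2)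
        \<le> \<delta> / (2 * (zeta_r s)\<^sup>2) * f k1 * f k2"
      unfolding card_A .
    finally show ?thesis .
  qed
  then have "prob E \<le> \<delta> / (2 * (zeta_r s)\<^sup>2) * zeta_r s * zeta_r s"
    unfolding E using G_meas zeta_r_sums[OF \<open>1 < s\<close>]
    by (intro measure_UN2_le_sums[where f = f]) (auto simp: A_def f_def)
  then show "prob E \<le> \<delta> / 2"
    using zeta_r_ge_1[OF \<open>1 < s\<close>] by (simp add: power2_eq_square)
qed

theorem theorem4:
  fixes M :: "'w measure" and K :: nat and \<delta> \<epsilon> s :: real
    and \<nu> :: "nat \<Rightarrow> real measure" and astar :: nat
    and Z :: "nat \<Rightarrow> nat \<Rightarrow> 'w \<Rightarrow> real"   \<comment> \<open>Z a j: (j+1)-th reward of arm a\<close>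
    and W :: "nat \<Rightarrow> nat \<Rightarrow> 'w \<Rightarrow> real"   \<comment> \<open>W k a: standard Laplace noise of phase k of arm a\<close>
    and SU :: "'u measure" and U :: "'w \<Rightarrow> 'u"  \<comment> \<open>internal randomness\<close>
    and pol :: "nat \<Rightarrow> 'u \<Rightarrow> (nat \<times> real) list \<Rightarrow> (nat \<Rightarrow> real) list \<Rightarrow> nat"  \<comment> \<open>sampling rule\<close>
  assumes P: "prob_space M"
    and K: "0 < K"
    and \<delta>: "0 < \<delta>" "\<delta> < 1" and \<epsilon>: "0 < \<epsilon>" and s: "1 < s"
    and subg: "\<forall>a<K. subgauss1 (\<nu> a)"
    and best: "astar < K" "\<forall>a<K. a \<noteq> astar \<longrightarrow> (\<integral>x. x \<partial>\<nu> a) < (\<integral>x. x \<partial>\<nu> astar)"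
    and Zdist: "\<forall>a<K. \<forall>j. distr M borel (Z a j) = \<nu> a"
    and Wdist: "\<forall>k\<ge>1. \<forall>a<K. distributed M lborel (W k a) laplace1"
    and indep: "prob_space.indep_vars M (\<lambda>_. borel)
                  (\<lambda>(b, i, j). if b then Z i j else W i j)
                  ({(True, a, j) | a j. a < K} \<union> {(False, k, a) | k a. 1 \<le> k \<and> a < K})"
    and Umeas: "U \<in> measurable M SU"
    and indepU: "prob_space.indep_set M
                  {U -` A \<inter> space M | A. A \<in> sets SU}
                  {(\<lambda>\<omega>. restrict (\<lambda>(b, i, j). if b then Z i j \<omega> else W i j \<omega>)
                       ({(True, a, j) | a j. a < K} \<union> {(False, k, a) | k a. 1 \<le> k \<and> a < K}))
                     -` B \<inter> space M | B. B \<in> sets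
                     (Pi\<^sub>M ({(True, a, j) | a j. a < K} \<union> {(False, k, a) | k a. 1 \<le> k \<and> a < K})
                       (\<lambda>_. borel :: real measure))}"
    and arms: "\<forall>\<omega>\<in>space M. \<forall>t\<ge>1.
                 algI K \<epsilon> pol (U \<omega>) (\<lambda>a j. Z a j \<omega>) (\<lambda>k a. W k a \<omega>) t < K"
    and init: "\<forall>\<omega>\<in>space M.
                 bij_betw (algI K \<epsilon> pol (U \<omega>) (\<lambda>a j. Z a j \<omega>) (\<lambda>k a. W k a \<omega>)) {1..K} {0..<K}"
  shows "measure M {\<omega> \<in> space M.
           wrong_stop K s \<epsilon> \<delta> (algI K \<epsilon> pol (U \<omega>) (\<lambda>a j. Z a j \<omega>) (\<lambda>k a. W k a \<omega>))
             (\<lambda>a j. Z a j \<omega>) (\<lambda>k a. W k a \<omega>) astar} \<le> \<delta>"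
proof -
  interpret prob_space M
    by (rule P)
  let ?Noise = "{\<omega>\<in>space M. laplace_noise_large K s \<delta> (\<lambda>k a. W k a \<omega>)}"
  let ?Gap = "{\<omega>\<in>space M. phase_gap_large K s \<delta> (\<lambda>a. \<integral>x. x \<partial>\<nu> a) (\<lambda>a j. Z a j \<omega>) astar}"
  have Noise: "?Noise \<in> events" "prob ?Noise \<le> \<delta> / 2"
    by (rule laplace_noise_large_prob[OF K \<delta> s Wdist])+
  have Gap: "?Gap \<in> events" "prob ?Gap \<le> \<delta> / 2"
    by (rule phase_gap_large_prob[OF \<delta> s best(1) indep _ _ subg Zdist]; simp)+
  have "laplace_noise_large K s \<delta> (\<lambda>k a. W k a \<omega>) \<or>
      phase_gap_large K s \<delta> (\<lambda>a. \<integral>x. x \<partial>\<nu> a) (\<lambda>a j. Z a j \<omega>) astar"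
    if "\<omega> \<in> space M" and "wrong_stop K s \<epsilon> \<delta> (algI K \<epsilon> pol (U \<omega>) (\<lambda>a j. Z a j \<omega>) (\<lambda>k a. W k a \<omega>))
             (\<lambda>a j. Z a j \<omega>) (\<lambda>k a. W k a \<omega>) astar" for \<omega>
    using wrong_stop_imp_large_deviation[OF K _ best \<epsilon> \<delta> s that(2)] init that(1)
      Ncnt_after_initial_round_robin by blast
  then have "measure M {\<omega> \<in> space M.
           wrong_stop K s \<epsilon> \<delta> (algI K \<epsilon> pol (U \<omega>) (\<lambda>a j. Z a j \<omega>) (\<lambda>k a. W k a \<omega>))
             (\<lambda>a j. Z a j \<omega>) (\<lambda>k a. W k a \<omega>) astar} \<le> prob (?Gap \<union> ?Noise)"
    using Gap Noise by (intro finite_measure_mono) auto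
  also have "\<dots> \<le> prob ?Gap + prob ?Noise"
    using Gap Noise by (intro measure_Un_le)
  finally show ?thesis
    using Gap Noise by simp
qed

end
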